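(* Let $k$ be a positive integer and let $G$ be a $2k$-connected $(P_2\cup kP_1)$-free graph. Let $u,v$ be distinct vertices of $G$, let $P$ be a longest $(u,v)$-path in $G$, oriented from $u$ to $v$, and suppose $V(P)\neq V(G)$. Let $x\in V(G)\setminus V(P)$ and write $N_P(x)=\{x_1,\dots,x_t\}$, where $x_1,\dots,x_t$ appear on $P$ in this order from $u$ to $v$. Fix $i\in\{1,\dots,t-1\}$, let $S_i$ be the set of vertices of $P$ strictly between $x_i$ and $x_{i+1}$, and let $X\subseteq N_P(x)^+$ be any set with $x_i^+\in X$ and $|X|=2k-1$. Then for every integer $j$ with $1\le j\le |S_i|$: if $j$ is odd then $N_P(x_i^{+j})\cap X=\emptyset$, and if $j$ is even then $|N_P(x_i^{+j})\cap X|\ge k+1$.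
   Context: All graphs are finite and simple. For a graph $H$, a graph $G$ is $H$-free if $G$ contains no induced subgraph isomorphic to $H$; $P_2\cup kP_1$ is the disjoint union of an edge and $k$ isolated vertices. A $(u,v)$-path is a path with endpoints $u$ and $v$. $N_P(y)$ is the set of neighbors of $y$ lying on $P$. For a vertex $w$ of the oriented path $P$, $w^{+}$ (also $w^{+1}$) is its successor and $w^{-}$ (also $w^{-1}$) its predecessor on $P$, and $w^{+\ell}$, $w^{-\ell}$ denote the successor of $w^{+(\ell-1)}$, resp. predecessor of $w^{-(\ell-1)}$. For $S\subseteq V(P)$, $S^+=\{w^+: w\in S\setminus\{v\}\}$. (Under the hypotheses, $|N_P(x)^+|\ge 2k-1$, so such $X$ exists.) *)

theory Defs
  imports Main
begin

definition simple_graph :: "'a set \<Rightarrow> ('a \<Rightarrow> 'a \<Rightarrow> bool) \<Rightarrow> bool" where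
  "simple_graph V E \<longleftrightarrow> finite V \<and>
     (\<forall>x y. E x y \<longrightarrow> x \<in> V \<and> y \<in> V \<and> x \<noteq> y \<and> E y x)"

definition connected_on :: "('a \<Rightarrow> 'a \<Rightarrow> bool) \<Rightarrow> 'a set \<Rightarrow> bool" where
  "connected_on E S \<longleftrightarrow>
     (\<forall>a\<in>S. \<forall>b\<in>S. (\<lambda>x y. E x y \<and> x \<in> S \<and> y \<in> S)\<^sup>*\<^sup>* a b)"

definition k_connected :: "'a set \<Rightarrow> ('a \<Rightarrow> 'a \<Rightarrow> bool) \<Rightarrow> nat \<Rightarrow> bool" where
  "k_connected V E m \<longleftrightarrow> card V > m \<and>
     (\<forall>S \<subseteq> V. card S < m \<longrightarrow> connected_on E (V - S))"

definition P2_kP1_free :: "'a set \<Rightarrow> ('a \<Rightarrow> 'a \<Rightarrow> bool) \<Rightarrow> nat \<Rightarrow> bool" where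
  "P2_kP1_free V E k \<longleftrightarrow>
     \<not> (\<exists>a b I. a \<in> V \<and> b \<in> V \<and> I \<subseteq> V \<and> card I = k \<and> a \<notin> I \<and> b \<notin> I \<and> E a b \<and>
          (\<forall>y\<in>I. \<forall>z\<in>I. \<not> E y z) \<and> (\<forall>y\<in>I. \<not> E a y \<and> \<not> E b y))"

definition is_path :: "'a set \<Rightarrow> ('a \<Rightarrow> 'a \<Rightarrow> bool) \<Rightarrow> 'a list \<Rightarrow> bool" where
  "is_path V E P \<longleftrightarrow> P \<noteq> [] \<and> distinct P \<and> set P \<subseteq> V \<and>
     (\<forall>i. Suc i < length P \<longrightarrow> E (P ! i) (P ! Suc i))"

definition uv_path :: "'a set \<Rightarrow> ('a \<Rightarrow> 'a \<Rightarrow> bool) \<Rightarrow> 'a \<Rightarrow> 'a \<Rightarrow> 'a list \<Rightarrow> bool" where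
  "uv_path V E u v P \<longleftrightarrow> is_path V E P \<and> hd P = u \<and> last P = v"

definition longest_uv_path :: "'a set \<Rightarrow> ('a \<Rightarrow> 'a \<Rightarrow> bool) \<Rightarrow> 'a \<Rightarrow> 'a \<Rightarrow> 'a list \<Rightarrow> bool" where
  "longest_uv_path V E u v P \<longleftrightarrow> uv_path V E u v P \<and>
     (\<forall>Q. uv_path V E u v Q \<longrightarrow> length Q \<le> length P)"

definition nbrP :: "('a \<Rightarrow> 'a \<Rightarrow> bool) \<Rightarrow> 'a list \<Rightarrow> 'a \<Rightarrow> 'a set" where
  "nbrP E P y = {w \<in> set P. E y w}"

definition succ_set :: "'a list \<Rightarrow> 'a set \<Rightarrow> 'a set" where
  "succ_set P S = {P ! Suc m | m. Suc m < length P \<and> P ! m \<in> S}"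

end

theory Submission
  imports Defs
begin

text \<open>
  The successors on P of the neighbours of x, together with x, form an independent set Y:
  otherwise P could be rerouted through x into a longer (u,v)-path. If an edge ab has an end a
  with no neighbour in Y and b is not in Y, then the vertices of Y missed by b, together with ab,
  would induce P_2 \<union> kP_1 unless there are fewer than k of them; as |Y| = 2k, b then sees at
  least k+1 vertices of X. Rerouting also shows that the two ends of an edge of P have at most one
  common neighbour in N_P(x)^+, so once a vertex of the segment sees k+1 of the 2k-1 vertices
  of X, its successor sees none of them.
\<close>

definition independent_set :: "('a \<Rightarrow> 'a \<Rightarrow> bool) \<Rightarrow> 'a set \<Rightarrow> bool" where
  "independent_set E I \<longleftrightarrow> (\<forall>y\<in>I. \<forall>z\<in>I. \<not> E y z)"

lemma split_after_index:
  assumes "Suc i < length xs"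
  obtains A B where "xs = A @ B" "A \<noteq> []" "B \<noteq> []" "last A = xs ! i" "hd B = xs ! Suc i"
    "length A = Suc i"
  using that[of "take (Suc i) xs" "drop (Suc i) xs"] assms
  by (force simp: last_conv_nth hd_drop_conv_nth min_absorb2)

lemma split_after_two_indices:
  assumes "i < j" "Suc j < length xs"
  obtains A B C where "xs = A @ B @ C" "A \<noteq> []" "B \<noteq> []" "C \<noteq> []"
    "last A = xs ! i" "hd B = xs ! Suc i" "last B = xs ! j" "hd C = xs ! Suc j"
proof -
  obtain AB C where AB: "xs = AB @ C" "AB \<noteq> []" "C \<noteq> []" "last AB = xs ! j" "hd C = xs ! Suc j"
    "length AB = Suc j"
    using split_after_index assms(2) .
  have "Suc i < length AB" using AB(6) assms(1) by simp
  then obtain A B where A: "AB = A @ B" "A \<noteq> []" "B \<noteq> []" "last A = AB ! i" "hd B = AB ! Suc i"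
    by (rule split_after_index)
  show thesis
    by (rule that[of A B C]) (use AB A assms in \<open>auto simp: nth_append\<close>)
qed

lemma split_after_three_indices:
  assumes "i < j" "j < l" "Suc l < length xs"
  obtains A B C D where "xs = A @ B @ C @ D" "A \<noteq> []" "B \<noteq> []" "C \<noteq> []" "D \<noteq> []"
    "last A = xs ! i" "hd B = xs ! Suc i" "last B = xs ! j" "hd C = xs ! Suc j"
    "last C = xs ! l" "hd D = xs ! Suc l"
proof -
  obtain ABC D where ABC: "xs = ABC @ D" "ABC \<noteq> []" "D \<noteq> []" "last ABC = xs ! l"
    "hd D = xs ! Suc l" "length ABC = Suc l"
    using split_after_index assms(3) .
  have "Suc j < length ABC" using ABC(6) assms(2) by simp
  then obtain A B C where A: "ABC = A @ B @ C" "A \<noteq> []" "B \<noteq> []" "C \<noteq> []"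
    "last A = ABC ! i" "hd B = ABC ! Suc i" "last B = ABC ! j" "hd C = ABC ! Suc j"
    using split_after_two_indices[OF assms(1)] by blast
  show thesis
    by (rule that[of A B C D]) (use ABC A assms in \<open>auto simp: nth_append\<close>)
qed

lemma simple_graph_sym: "simple_graph V E \<Longrightarrow> E a b \<Longrightarrow> E b a"
  unfolding simple_graph_def by blast

lemma simple_graph_finite: "simple_graph V E \<Longrightarrow> finite V"
  unfolding simple_graph_def by blast

lemma simple_graph_irrefl: "simple_graph V E \<Longrightarrow> \<not> E a a"
  unfolding simple_graph_def by blast

lemma simple_graph_successively_rev:
  assumes "simple_graph V E"
  shows "successively E (rev xs) \<longleftrightarrow> successively E xs"
proof -
  have "(\<lambda>a b. E b a) = E" using simple_graph_sym[OF assms] by blast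
  then show ?thesis by (metis successively_rev)
qed

lemma is_path_iff_successively:
  "is_path V E P \<longleftrightarrow> P \<noteq> [] \<and> distinct P \<and> set P \<subseteq> V \<and> successively E P"
  by (simp add: is_path_def successively_conv_nth)

lemma longest_uv_pathD:
  assumes "longest_uv_path V E u v P"
  shows "P \<noteq> []" "distinct P" "set P \<subseteq> V" "successively E P" "hd P = u" "last P = v"
  using assms by (auto simp: longest_uv_path_def uv_path_def is_path_iff_successively)

lemma longest_uv_path_no_insertion:
  assumes L: "longest_uv_path V E u v P" and x: "x \<in> V - set P"
    and Q: "set Q = insert x (set P)" "length Q = Suc (length P)" "hd Q = hd P" "last Q = last P"
      "successively E Q"
  shows False
proof -
  have "card (set Q) = length Q"
    using Q(1,2) x longest_uv_pathD(2)[OF L] by (simp add: distinct_card)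
  then have "uv_path V E u v Q"
    using Q x longest_uv_pathD[OF L]
    by (auto simp: uv_path_def is_path_iff_successively card_distinct)
  then have "length Q \<le> length P" using L by (simp add: longest_uv_path_def)
  with Q(2) show False by simp
qed

lemma longest_uv_path_nbr_succ_not_adjacent:
  assumes G: "simple_graph V E" and L: "longest_uv_path V E u v P" and x: "x \<in> V - set P"
    and P: "P = A @ B" "A \<noteq> []" "B \<noteq> []" and "E x (last A)"
  shows "\<not> E x (hd B)"
proof
  assume "E x (hd B)"
  then have "successively E (A @ x # B)"
    using longest_uv_pathD(4)[OF L] assms simple_graph_sym[OF G]
    by (auto simp: successively_append_iff successively_Cons)
  then show False
    by (rule longest_uv_path_no_insertion[OF L x, rotated -1]) (use P in auto)
qed

lemma longest_uv_path_nbr_succs_not_adjacent: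
  assumes G: "simple_graph V E" and L: "longest_uv_path V E u v P" and x: "x \<in> V - set P"
    and P: "P = A @ B @ C" "A \<noteq> []" "B \<noteq> []" "C \<noteq> []" and "E x (last A)" "E x (last B)"
  shows "\<not> E (hd B) (hd C)"
proof
  assume "E (hd B) (hd C)"
  then have "successively E (A @ x # rev B @ C)"
    using longest_uv_pathD(4)[OF L] assms simple_graph_sym[OF G] simple_graph_successively_rev[OF G]
    by (auto simp: successively_append_iff successively_Cons hd_rev last_rev)
  then show False
    by (rule longest_uv_path_no_insertion[OF L x, rotated -1]) (use P in auto)
qed

lemma longest_uv_path_no_reroute_edge_after:
  assumes G: "simple_graph V E" and L: "longest_uv_path V E u v P" and x: "x \<in> V - set P"
    and P: "P = A @ B @ C @ D" "A \<noteq> []" "B \<noteq> []" "C \<noteq> []" "D \<noteq> []"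
    and "E x (last A)" "E x (last B)"
  shows "\<not> (E (hd B) (last C) \<and> E (hd C) (hd D))"
proof
  assume "E (hd B) (last C) \<and> E (hd C) (hd D)"
  then have "successively E (A @ x # rev B @ rev C @ D)"
    using longest_uv_pathD(4)[OF L] assms simple_graph_sym[OF G] simple_graph_successively_rev[OF G]
    by (auto simp: successively_append_iff successively_Cons hd_rev last_rev)
  then show False
    by (rule longest_uv_path_no_insertion[OF L x, rotated -1]) (use P in auto)
qed

lemma longest_uv_path_no_reroute_edge_before:
  assumes G: "simple_graph V E" and L: "longest_uv_path V E u v P" and x: "x \<in> V - set P"
    and P: "P = A @ B @ C @ D" "A \<noteq> []" "B \<noteq> []" "C \<noteq> []" "D \<noteq> []"
    and "E x (last B)" "E x (last C)"
  shows "\<not> (E (last A) (hd C) \<and> E (hd B) (hd D))"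
proof
  assume "E (last A) (hd C) \<and> E (hd B) (hd D)"
  then have "successively E (A @ C @ x # rev B @ D)"
    using longest_uv_pathD(4)[OF L] assms simple_graph_sym[OF G] simple_graph_successively_rev[OF G]
    by (auto simp: successively_append_iff successively_Cons hd_rev last_rev)
  then show False
    by (rule longest_uv_path_no_insertion[OF L x, rotated -1]) (use P in auto)
qed

lemma longest_uv_path_no_reroute_edge_between:
  assumes G: "simple_graph V E" and L: "longest_uv_path V E u v P" and x: "x \<in> V - set P"
    and P: "P = A @ B @ C @ D" "A \<noteq> []" "B \<noteq> []" "C \<noteq> []" "D \<noteq> []"
    and "E x (last A)" "E x (last C)"
  shows "\<not> (E (hd B) (hd C) \<and> E (last B) (hd D))"
proof
  assume "E (hd B) (hd C) \<and> E (last B) (hd D)"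
  then have "successively E (A @ x # rev C @ B @ D)"
    using longest_uv_pathD(4)[OF L] assms simple_graph_sym[OF G] simple_graph_successively_rev[OF G]
    by (auto simp: successively_append_iff successively_Cons hd_rev last_rev)
  then show False
    by (rule longest_uv_path_no_insertion[OF L x, rotated -1]) (use P in auto)
qed

lemma mem_succ_set_nbrP:
  "z \<in> succ_set P (nbrP E P x) \<longleftrightarrow> (\<exists>t. Suc t < length P \<and> E x (P ! t) \<and> z = P ! Suc t)"
  by (auto simp: succ_set_def nbrP_def)

lemma longest_uv_path_independent_succ_set:
  assumes G: "simple_graph V E" and L: "longest_uv_path V E u v P" and x: "x \<in> V - set P"
    and X: "X \<subseteq> succ_set P (nbrP E P x)"
  shows "independent_set E (insert x X)"
proof -
  have x_succ: "\<not> E x (P ! Suc t)" if t: "Suc t < length P" "E x (P ! t)" for t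
  proof -
    obtain A B where P: "P = A @ B" "A \<noteq> []" "B \<noteq> []"
      and ends: "last A = P ! t" "hd B = P ! Suc t"
      by (rule split_after_index[OF t(1)])
    from longest_uv_path_nbr_succ_not_adjacent[OF G L x P] show ?thesis
      unfolding ends using t(2) by blast
  qed
  have succ_succ_less: "\<not> E (P ! Suc t1) (P ! Suc t2)"
    if t: "t1 < t2" "Suc t2 < length P" "E x (P ! t1)" "E x (P ! t2)" for t1 t2
  proof -
    obtain A B C where P: "P = A @ B @ C" "A \<noteq> []" "B \<noteq> []" "C \<noteq> []"
      and ends: "last A = P ! t1" "hd B = P ! Suc t1" "last B = P ! t2" "hd C = P ! Suc t2"
      by (rule split_after_two_indices[OF t(1,2)])
    from longest_uv_path_nbr_succs_not_adjacent[OF G L x P] show ?thesis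
      unfolding ends using t(3,4) by blast
  qed
  have succ_succ: "\<not> E (P ! Suc t1) (P ! Suc t2)"
    if "Suc t1 < length P" "E x (P ! t1)" "Suc t2 < length P" "E x (P ! t2)" for t1 t2
    using succ_succ_less[of t1 t2] succ_succ_less[of t2 t1] that
      simple_graph_sym[OF G] simple_graph_irrefl[OF G]
    by (cases t1 t2 rule: linorder_cases) auto
  have "independent_set E (insert x (succ_set P (nbrP E P x)))"
    unfolding independent_set_def
    using x_succ succ_succ simple_graph_sym[OF G] simple_graph_irrefl[OF G]
    by (fastforce simp: mem_succ_set_nbrP)
  with X show ?thesis unfolding independent_set_def by blast
qed

lemma longest_uv_path_no_edge_dominating_two_succs:
  assumes G: "simple_graph V E" and L: "longest_uv_path V E u v P" and x: "x \<in> V - set P"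
    and t: "t1 < t2" "Suc t2 < length P" "E x (P ! t1)" "E x (P ! t2)" and i: "Suc i < length P"
  shows "\<not> (E (P ! i) (P ! Suc t1) \<and> E (P ! i) (P ! Suc t2) \<and>
            E (P ! Suc i) (P ! Suc t1) \<and> E (P ! Suc i) (P ! Suc t2))"
proof -
  have irr: "\<And>a. \<not> E a a" and sym: "\<And>a b. E a b \<longleftrightarrow> E b a"
    using simple_graph_irrefl[OF G] simple_graph_sym[OF G] by blast+
  consider "i < t1" | "i = t1" | "t1 < i" "i < t2" | "i = t2" | "t2 < i" by linarith
  then show ?thesis
  proof cases
    case 1
    obtain A B C D where P: "P = A @ B @ C @ D" "A \<noteq> []" "B \<noteq> []" "C \<noteq> []" "D \<noteq> []"
      and ends: "last A = P ! i" "hd B = P ! Suc i" "last B = P ! t1" "hd C = P ! Suc t1"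
      "last C = P ! t2" "hd D = P ! Suc t2"
      by (rule split_after_three_indices[OF 1 t(1,2)])
    from longest_uv_path_no_reroute_edge_before[OF G L x P] show ?thesis
      unfolding ends using t by blast
  next
    case 3
    obtain A B C D where P: "P = A @ B @ C @ D" "A \<noteq> []" "B \<noteq> []" "C \<noteq> []" "D \<noteq> []"
      and ends: "last A = P ! t1" "hd B = P ! Suc t1" "last B = P ! i" "hd C = P ! Suc i"
      "last C = P ! t2" "hd D = P ! Suc t2"
      by (rule split_after_three_indices[OF 3 t(2)])
    from longest_uv_path_no_reroute_edge_between[OF G L x P] show ?thesis
      unfolding ends using t by (auto simp: sym)
  next
    case 5
    obtain A B C D where P: "P = A @ B @ C @ D" "A \<noteq> []" "B \<noteq> []" "C \<noteq> []" "D \<noteq> []"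
      and ends: "last A = P ! t1" "hd B = P ! Suc t1" "last B = P ! t2" "hd C = P ! Suc t2"
      "last C = P ! i" "hd D = P ! Suc i"
      by (rule split_after_three_indices[OF t(1) 5 i])
    from longest_uv_path_no_reroute_edge_after[OF G L x P] show ?thesis
      unfolding ends using t by (auto simp: sym)
    \<comment> \<open>if i = t1 or i = t2, then P ! Suc i is itself one of the two successors\<close>
  qed (use irr in auto)
qed

lemma longest_uv_path_edge_dominates_one_succ:
  assumes G: "simple_graph V E" and L: "longest_uv_path V E u v P" and x: "x \<in> V - set P"
    and i: "Suc i < length P"
    and yz: "y \<in> succ_set P (nbrP E P x)" "z \<in> succ_set P (nbrP E P x)"
    and adj: "E (P ! i) y" "E (P ! i) z" "E (P ! Suc i) y" "E (P ! Suc i) z"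
  shows "y = z"
proof -
  obtain t1 t2 where t: "Suc t1 < length P" "E x (P ! t1)" "y = P ! Suc t1"
    "Suc t2 < length P" "E x (P ! t2)" "z = P ! Suc t2"
    using yz unfolding mem_succ_set_nbrP by blast
  consider "t1 = t2" | "t1 < t2" | "t2 < t1" by linarith
  then show ?thesis
  proof cases
    case 2
    then show ?thesis using longest_uv_path_no_edge_dominating_two_succs[OF G L x 2] t i adj by blast
  next
    case 3
    then show ?thesis using longest_uv_path_no_edge_dominating_two_succs[OF G L x 3] t i adj by blast
  qed (use t in simp)
qed

lemma succ_set_subset: "succ_set P S \<subseteq> set P"
  by (auto simp: succ_set_def)

lemma nth_mem_succ_set_nbrP:
  assumes "distinct P" "m < length P"
  shows "P ! m \<in> succ_set P (nbrP E P x) \<longleftrightarrow> 0 < m \<and> E x (P ! (m - 1))"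
proof
  assume "P ! m \<in> succ_set P (nbrP E P x)"
  then obtain t where t: "Suc t < length P" "E x (P ! t)" "P ! m = P ! Suc t"
    unfolding mem_succ_set_nbrP by blast
  then have "m = Suc t" using assms by (simp add: nth_eq_iff_index_eq)
  with t show "0 < m \<and> E x (P ! (m - 1))" by simp
next
  assume "0 < m \<and> E x (P ! (m - 1))"
  then show "P ! m \<in> succ_set P (nbrP E P x)"
    unfolding mem_succ_set_nbrP using assms(2) by (intro exI[of _ "m - 1"]) auto
qed

lemma P2_kP1_free_card_independent_set_less:
  assumes G: "simple_graph V E" and F: "P2_kP1_free V E k"
    and Y: "independent_set E Y" "Y \<subseteq> V" and ab: "E a b" "b \<notin> Y" "\<forall>y\<in>Y. \<not> E a y"
  shows "card Y < k + card {y\<in>Y. E b y}"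
proof -
  define I where "I = {y\<in>Y. \<not> E b y} - {a}"
  have finY: "finite Y" by (rule finite_subset[OF Y(2) simple_graph_finite[OF G]])
  have "card I < k"
  proof (rule ccontr)
    assume "\<not> card I < k"
    moreover have "finite I" using finY by (simp add: I_def)
    ultimately obtain J where J: "J \<subseteq> I" "card J = k"
      by (meson not_less obtain_subset_with_card_n)
    have "a \<in> V" "b \<in> V" using ab(1) G unfolding simple_graph_def by blast+
    moreover have "J \<subseteq> Y" "\<forall>y\<in>J. \<not> E b y \<and> y \<noteq> a" using J(1) unfolding I_def by auto
    then have "J \<subseteq> V" "a \<notin> J" "b \<notin> J" "\<forall>y\<in>J. \<forall>z\<in>J. \<not> E y z"
      "\<forall>y\<in>J. \<not> E a y \<and> \<not> E b y"
      using Y ab unfolding independent_set_def by blast+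
    ultimately show False
      using F J(2) ab(1) unfolding P2_kP1_free_def by blast
  qed
  moreover have "Y \<subseteq> I \<union> {y\<in>Y. E b y}"
    using simple_graph_sym[OF G ab(1)] unfolding I_def by blast
  then have "card Y \<le> card I + card {y\<in>Y. E b y}"
    using finY card_mono[of "I \<union> {y\<in>Y. E b y}" Y] card_Un_le[of I "{y\<in>Y. E b y}"]
    unfolding I_def by fastforce
  ultimately show ?thesis by linarith
qed

lemma alternating_neighbourhoods:
  fixes c :: "nat \<Rightarrow> 'a"
  assumes G: "simple_graph V E" and F: "P2_kP1_free V E k"
    and Y: "independent_set E (insert x X)" "insert x X \<subseteq> V" "x \<notin> X"
    and card_X: "card X = 2 * k - 1"
    and walk: "\<And>j. 1 \<le> j \<Longrightarrow> j < n \<Longrightarrow> E (c j) (c (Suc j))"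
    and start: "c 1 \<in> X"
    and off_x: "\<And>j. 1 \<le> j \<Longrightarrow> j \<le> n \<Longrightarrow> \<not> E x (c j)"
    and inner: "\<And>j. 2 \<le> j \<Longrightarrow> j \<le> n \<Longrightarrow> c j \<notin> X"
    and one_common: "\<And>j y z. 1 \<le> j \<Longrightarrow> j < n \<Longrightarrow> y \<in> X \<Longrightarrow> z \<in> X \<Longrightarrow>
       E (c j) y \<Longrightarrow> E (c j) z \<Longrightarrow> E (c (Suc j)) y \<Longrightarrow> E (c (Suc j)) z \<Longrightarrow> y = z"
    and j: "1 \<le> j" "j \<le> n"
  shows "(odd j \<longrightarrow> (\<forall>w\<in>X. \<not> E (c j) w)) \<and> (even j \<longrightarrow> k + 1 \<le> card {w\<in>X. E (c j) w})"
  using j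
proof (induction j rule: nat_induct_at_least)
  case base
  have "\<forall>w\<in>X. \<not> E (c 1) w" using start Y(1) unfolding independent_set_def by blast
  then show ?case by simp
next
  case (Suc j)
  let ?N = "\<lambda>a. {w\<in>X. E a w}"
  have "finite (insert x X)" by (rule finite_subset[OF Y(2) simple_graph_finite[OF G]])
  then have finX: "finite X" by simp
  note sym = simple_graph_sym[OF G]
  have jn: "1 \<le> j" "j < n" using Suc by simp_all
  have ab: "E (c j) (c (Suc j))" using walk jn by simp
  have b_x: "\<not> E (c (Suc j)) x" using off_x[of "Suc j"] jn sym by auto
  have "c (Suc j) \<noteq> x" using ab off_x[of j] jn sym by auto
  then have b: "c (Suc j) \<notin> insert x X" using inner[of "Suc j"] jn by simp
  have card_Y: "card (insert x X) = card X + 1" using finX Y(3) by simp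
  have N_b: "k + 1 \<le> card (?N (c (Suc j)))"
    if "E a (c (Suc j))" "\<forall>y\<in>insert x X. \<not> E a y" for a
  proof -
    have "{y \<in> insert x X. E (c (Suc j)) y} = ?N (c (Suc j))" using b_x by auto
    then have "card (insert x X) < k + card (?N (c (Suc j)))"
      using P2_kP1_free_card_independent_set_less[OF G F Y(1,2) that(1) b that(2)] by simp
    with card_Y card_X show ?thesis by arith
  qed
  show ?case
  proof (cases "odd j")
    case True
    then have "\<forall>y\<in>insert x X. \<not> E (c j) y"
      using Suc.IH jn off_x[of j] sym by auto
    with True show ?thesis using N_b[OF ab] by simp
  next
    case False
    have N_a: "k + 1 \<le> card (?N (c j))" using False Suc.IH jn by simp
    have "\<not> E (c (Suc j)) z" if z: "z \<in> X" for z
    proof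
      assume "E (c (Suc j)) z"
      moreover have "\<forall>y\<in>insert x X. \<not> E z y" using Y(1) z unfolding independent_set_def by blast
      ultimately have N_b': "k + 1 \<le> card (?N (c (Suc j)))" using N_b[of z] sym by blast
      have "card (?N (c j) \<inter> ?N (c (Suc j))) \<le> 1"
        using one_common[of j] jn finX by (auto simp: card_le_Suc0_iff_eq)
      moreover have "card (?N (c j) \<union> ?N (c (Suc j))) \<le> card X"
        using finX by (intro card_mono) auto
      moreover have "card (?N (c j)) + card (?N (c (Suc j))) =
          card (?N (c j) \<union> ?N (c (Suc j))) + card (?N (c j) \<inter> ?N (c (Suc j)))"
        using finX by (intro card_Un_Int) auto
      ultimately show False using N_a N_b' card_X by arith
    qed
    with False show ?thesis by simp
  qed
qed

lemma longest_uv_path_segment_alternating: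
  assumes G: "simple_graph V E" and F: "P2_kP1_free V E k"
    and L: "longest_uv_path V E u v P" and x: "x \<in> V - set P"
    and X: "X \<subseteq> succ_set P (nbrP E P x)" "card X = 2 * k - 1" "P ! Suc p \<in> X"
    and q: "q < length P" and gap: "\<And>m. p < m \<Longrightarrow> m < q \<Longrightarrow> \<not> E x (P ! m)"
    and j: "1 \<le> j" "j \<le> q - p - 1"
  shows "(odd j \<longrightarrow> (\<forall>w\<in>X. \<not> E (P ! (p + j)) w)) \<and>
         (even j \<longrightarrow> k + 1 \<le> card {w\<in>X. E (P ! (p + j)) w})"
proof (rule alternating_neighbourhoods[OF G F, of x X "q - p - 1" "\<lambda>i. P ! (p + i)"])
  have XP: "X \<subseteq> set P" using X(1) succ_set_subset by (rule subset_trans)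
  then show "insert x X \<subseteq> V" using x longest_uv_pathD(3)[OF L] by blast
  show "x \<notin> X" using XP x by blast
  show "independent_set E (insert x X)"
    by (rule longest_uv_path_independent_succ_set[OF G L x X(1)])
  show "E (P ! (p + i)) (P ! (p + Suc i))" if "1 \<le> i" "i < q - p - 1" for i
    using successively_nth[OF longest_uv_pathD(4)[OF L], of "p + i"] that q by simp
  show off_x: "\<not> E x (P ! (p + i))" if "1 \<le> i" "i \<le> q - p - 1" for i
    using gap that by simp
  show "P ! (p + i) \<notin> X" if "2 \<le> i" "i \<le> q - p - 1" for i
  proof
    assume "P ! (p + i) \<in> X"
    then have "E x (P ! (p + i - 1))"
      using nth_mem_succ_set_nbrP[OF longest_uv_pathD(2)[OF L], of "p + i"] X(1) q that
      by auto
    with off_x[of "i - 1"] that show False by simp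
  qed
  show "y = z" if "1 \<le> i" "i < q - p - 1" "y \<in> X" "z \<in> X"
    "E (P ! (p + i)) y" "E (P ! (p + i)) z" "E (P ! (p + Suc i)) y" "E (P ! (p + Suc i)) z"
    for i y z
    by (rule longest_uv_path_edge_dominates_one_succ[OF G L x, of "p + i"])
      (use that X(1) q in auto)
qed (use X(2,3) j in simp_all)

theorem mainTheorem5:
  fixes V :: "'a set" and E :: "'a \<Rightarrow> 'a \<Rightarrow> bool" and k :: nat
    and u v x :: 'a and P :: "'a list" and X :: "'a set" and p q :: nat
  assumes "k > 0"
    and "simple_graph V E"
    and "k_connected V E (2 * k)"
    and "P2_kP1_free V E k"
    and "u \<in> V" and "v \<in> V" and "u \<noteq> v"
    and "longest_uv_path V E u v P"
    and "set P \<noteq> V"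
    and "x \<in> V - set P"
    \<comment> \<open>x_i = P!p and x_{i+1} = P!q are consecutive elements of N_P(x) along P\<close>
    and "p < q" and "q < length P"
    and "P ! p \<in> nbrP E P x" and "P ! q \<in> nbrP E P x"
    and "\<forall>m. p < m \<and> m < q \<longrightarrow> P ! m \<notin> nbrP E P x"
    and "X \<subseteq> succ_set P (nbrP E P x)"
    and "P ! Suc p \<in> X"
    and "card X = 2 * k - 1"
  shows "\<forall>j. 1 \<le> j \<and> j \<le> q - p - 1 \<longrightarrow>
           (odd j \<longrightarrow> nbrP E P (P ! (p + j)) \<inter> X = {}) \<and>
           (even j \<longrightarrow> card (nbrP E P (P ! (p + j)) \<inter> X) \<ge> k + 1)"
proof (intro allI impI)
  fix j assume j: "1 \<le> j \<and> j \<le> q - p - 1"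
  have gap: "\<not> E x (P ! m)" if "p < m" "m < q" for m
    using assms(12,15) that by (auto simp: nbrP_def)
  have XP: "X \<subseteq> set P" using assms(16) succ_set_subset by (rule subset_trans)
  have "nbrP E P (P ! (p + j)) \<inter> X = {w\<in>X. E (P ! (p + j)) w}"
    using XP by (auto simp: nbrP_def)
  then show "(odd j \<longrightarrow> nbrP E P (P ! (p + j)) \<inter> X = {}) \<and>
      (even j \<longrightarrow> card (nbrP E P (P ! (p + j)) \<inter> X) \<ge> k + 1)"
    using longest_uv_path_segment_alternating[OF assms(2,4,8,10,16,18,17,12) gap] j by auto
qed

end
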